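(* Let $u,v\in\mathfrak{U}(\mathbb{R})$ be such that each is the restriction to $[-\beta,\beta]$ of an element of $\mathcal{C}^1(\mathbb{R})^*$, and let $\gamma_n<\gamma_m$ be in $\Gamma$. Then $$\int_{\gamma_n}^{\gamma_m}Du(x)v(x)\,dx=-\int_{\gamma_n}^{\gamma_m}u(x)Dv(x)\,dx+u^-(\gamma_m)v^-(\gamma_m)-u^+(\gamma_n)v^+(\gamma_n).$$
   Context: Framework (Λ-limits / nonstandard analysis): $\mathfrak{X}=\mathcal{P}_{fin}(\mathfrak{F}(\mathbb{R},\mathbb{R}))$ directed by inclusion; $\mathbb{R}^*\supset\mathbb{R}$ is a non-Archimedean ordered field of Λ-limits of nets $\mathfrak{X}\to\mathbb{R}$; internal sets/functions, natural extensions $E^*,f^*$, hyperfinite sums are defined via Λ-limits; for internal $u$, $\int_a^bu\,dx$ means $(\int_a^b)^*u\,dx$. For $\lambda\in\mathfrak{X}$, $V_\lambda$ is the span of $\lambda$; an internal $u=\lim_{\lambda\uparrow\Lambda}u_\lambda$ is an ultrafunction if $u_\lambda\in V_\lambda$ for all $\lambda$; for a vector space $W$ of real functions, $\widetilde{W}=W^*\cap\{\text{ultrafunctions}\}$. Grid: a positive infinite $\beta\in\mathbb{R}^*$, a hyperfinite $\Gamma=\{\gamma_0<\dots<\gamma_\ell\}\subset\mathbb{R}^*$ with $\gamma_0=-\beta$, $\gamma_\ell=\beta$, $0<\gamma_{j+1}-\gamma_j<\eta$ for a fixed infinitesimal $\eta$, and $\mathbb{R}\subseteq\Gamma$; $\mathbb{I}_j=(\gamma_j,\gamma_{j+1})_{\mathbb{R}^*}$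 with characteristic function $\chi_j$. $\mathfrak{U}(\mathbb{R})$: functions $u:[-\beta,\beta]\to\mathbb{R}^*$ of the form $\sum_{j=0}^{\ell-1}v_j\chi_j$ with $v_j\in\widetilde{\mathcal{C}^1(\mathbb{R})}$, with the $L^2$ inner product $\int^*uv$. $u^\pm(\gamma_j)=u(\gamma_j^\pm)$ are internal one-sided limits at grid points; values at grid points: $u(\gamma_j)=\tfrac12(u(\gamma_j^+)+u(\gamma_j^-))$ for $1\le j\le\ell-1$, $u(-\beta)=u(\gamma_0^+)$, $u(\beta)=u(\gamma_\ell^-)$. For $q\in[-\beta,\beta]$, $\delta_q$ is the unique element of $\mathfrak{U}(\mathbb{R})$ with $\int^*w\delta_q=w(q)$ for all $w\in\mathfrak{U}(\mathbb{R})$. Derivative: for $u=\sum_jv_j\chi_j\in\mathfrak{U}(\mathbb{R})$, $u'=\sum_jv_j'\chi_j$, $P_{\mathfrak{U}}$ the orthogonal projection onto $\mathfrak{U}(\mathbb{R})$, $\triangle u(\gamma_j)=u(\gamma_j^+)-u(\gamma_j^-)$, and $Du=P_{\mathfrak{U}}u'+\sum_{j=1}^{\ell-1}\triangle u(\gamma_j)\delta_{\gamma_j}$. *)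

theory Defs
  imports "HOL-Analysis.Analysis"
begin

text \<open>The index set X = P_fin(F(R,R)) is modelled by the type
  of sets of real functions; a Lambda-limit is given by a fine ultrafilter on X
  (concentrated on finite sets).  Internal objects (hyperreals, hypernaturals, internal
  functions, internal sequences) are nets indexed by lambda, and an internal equation
  holds iff it holds eventually along the ultrafilter.\<close>

type_synonym idx = "(real \<Rightarrow> real) set"

definition Lambda_filter :: "idx filter \<Rightarrow> bool" where
  "Lambda_filter F \<longleftrightarrow> F \<noteq> bot \<and>
     (\<forall>P. eventually P F \<or> eventually (\<lambda>x. \<not> P x) F) \<and>
     (\<forall>l. finite l \<longrightarrow> eventually (\<lambda>mu. finite mu \<and> l \<subseteq> mu) F)"

definition Vspan :: "idx \<Rightarrow> (real \<Rightarrow> real) set" where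
  "Vspan l = {g. \<exists>c. g = (\<lambda>x. \<Sum>h\<in>l. c h * h x)}"

definition C1fun :: "(real \<Rightarrow> real) \<Rightarrow> bool" where
  "C1fun f \<longleftrightarrow> (\<forall>x. f differentiable (at x)) \<and> continuous_on UNIV (deriv f)"

text \<open>Standard (per-index) versions of the constructions; the grid is
  gamma 0 < ... < gamma ell, and the pieces are the open intervals.\<close>

definition pw :: "nat \<Rightarrow> (nat \<Rightarrow> real) \<Rightarrow> (nat \<Rightarrow> real \<Rightarrow> real) \<Rightarrow> real \<Rightarrow> real" where
  "pw ell gam c x = (\<Sum>j<ell. c j x * indicator {gam j<..<gam (Suc j)} x)"

definition rlim :: "(real \<Rightarrow> real) \<Rightarrow> real \<Rightarrow> real" where
  "rlim f a = Lim (at_right a) f"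

definition llim :: "(real \<Rightarrow> real) \<Rightarrow> real \<Rightarrow> real" where
  "llim f a = Lim (at_left a) f"

definition gval :: "nat \<Rightarrow> (nat \<Rightarrow> real) \<Rightarrow> (real \<Rightarrow> real) \<Rightarrow> real \<Rightarrow> real" where
  "gval ell gam w x =
     (if x = gam 0 then rlim w x
      else if x = gam ell then llim w x
      else if (\<exists>j\<in>{1..<ell}. x = gam j) then (rlim w x + llim w x) / 2
      else w x)"

definition Usp :: "idx \<Rightarrow> nat \<Rightarrow> (nat \<Rightarrow> real) \<Rightarrow> (real \<Rightarrow> real) set" where
  "Usp l ell gam = {pw ell gam c | c. \<forall>j<ell. c j \<in> Vspan l \<and> C1fun (c j)}"

definition delta :: "idx \<Rightarrow> real \<Rightarrow> nat \<Rightarrow> (nat \<Rightarrow> real) \<Rightarrow> real \<Rightarrow> real \<Rightarrow> real" where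
  "delta l b ell gam q = (THE d. d \<in> Usp l ell gam \<and>
     (\<forall>w\<in>Usp l ell gam. integral {-b..b} (\<lambda>x. w x * d x) = gval ell gam w q))"

definition Pproj :: "idx \<Rightarrow> real \<Rightarrow> nat \<Rightarrow> (nat \<Rightarrow> real) \<Rightarrow> (real \<Rightarrow> real) \<Rightarrow> real \<Rightarrow> real" where
  "Pproj l b ell gam f = (THE p. p \<in> Usp l ell gam \<and>
     (\<forall>w\<in>Usp l ell gam. integral {-b..b} (\<lambda>x. (f x - p x) * w x) = 0))"

definition Dop :: "idx \<Rightarrow> real \<Rightarrow> nat \<Rightarrow> (nat \<Rightarrow> real) \<Rightarrow> (nat \<Rightarrow> real \<Rightarrow> real) \<Rightarrow> real \<Rightarrow> real" where
  "Dop l b ell gam c x =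
     Pproj l b ell gam (pw ell gam (\<lambda>j. deriv (c j))) x +
     (\<Sum>j\<in>{1..<ell}. (rlim (pw ell gam c) (gam j) - llim (pw ell gam c) (gam j))
                        * delta l b ell gam (gam j) x)"

end

theory Submission
  imports Defs "HOL-Library.Function_Algebras"
begin

text \<open>Since \<open>u\<close> and \<open>v\<close> are restrictions of \<open>C\<^sup>1\<close> functions, their jumps at the interior grid
  points vanish, so \<open>Du\<close> is the orthogonal projection of the piecewise derivative \<open>u'\<close>. The
  truncation of \<open>v\<close> to \<open>[\<gamma>\<^sub>n, \<gamma>\<^sub>m]\<close> still lies in \<open>U(\<real>)\<close>, so projecting \<open>u'\<close> does not change its
  integral against \<open>v\<close> over that interval. What remains is classical integration by parts for
  the \<open>C\<^sup>1\<close> functions \<open>f\<^sub>u, f\<^sub>v\<close>, whose product has derivative \<open>u'v + uv'\<close> off the finitely many grid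
  points. The projection exists and is unique because \<open>U(\<real>)\<close> lies in the span of finitely
  many functions and the \<open>L\<^sup>2\<close> form is definite on it (Gram--Schmidt).\<close>

section \<open>Orthogonal projection for semi-inner products on function spaces\<close>

definition fscale :: "real \<Rightarrow> (real \<Rightarrow> real) \<Rightarrow> real \<Rightarrow> real" where
  "fscale a f = (\<lambda>x. a * f x)"

interpretation fun_space: vector_space fscale
  by unfold_locales (auto simp: fscale_def plus_fun_def algebra_simps)

locale semi_inner_product =
  fixes S :: "(real \<Rightarrow> real) set"
    and ip :: "(real \<Rightarrow> real) \<Rightarrow> (real \<Rightarrow> real) \<Rightarrow> real"
  assumes subspace: "fun_space.subspace S"
    and add_left: "f \<in> S \<Longrightarrow> g \<in> S \<Longrightarrow> h \<in> S \<Longrightarrow> ip (f + g) h = ip f h + ip g h"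
    and scale_left: "f \<in> S \<Longrightarrow> h \<in> S \<Longrightarrow> ip (fscale a f) h = a * ip f h"
    and sym: "f \<in> S \<Longrightarrow> g \<in> S \<Longrightarrow> ip f g = ip g f"
    and nonneg: "f \<in> S \<Longrightarrow> 0 \<le> ip f f"
begin

lemma diff_left: "f \<in> S \<Longrightarrow> g \<in> S \<Longrightarrow> h \<in> S \<Longrightarrow> ip (f - g) h = ip f h - ip g h"
  using add_left[of "f - g" g h] fun_space.subspace_diff[OF subspace] by simp

lemma add_right: "f \<in> S \<Longrightarrow> g \<in> S \<Longrightarrow> h \<in> S \<Longrightarrow> ip h (f + g) = ip h f + ip h g"
  using add_left sym fun_space.subspace_add[OF subspace] by metis

lemma scale_right: "f \<in> S \<Longrightarrow> h \<in> S \<Longrightarrow> ip h (fscale a f) = a * ip h f"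
  using scale_left sym fun_space.subspace_scale[OF subspace] by metis

lemma zero_right: "f \<in> S \<Longrightarrow> ip f 0 = 0"
  using scale_left[of 0 f] sym fun_space.subspace_0[OF subspace]
  by (metis fun_space.scale_zero_left mult_zero_left)

lemma orthogonal_if_self_zero:
  assumes f: "f \<in> S" and g: "g \<in> S" and ff: "ip f f = 0"
  shows "ip f g = 0"
proof -
  define A where "A = ip f g"
  define C where "C = ip g g"
  define t where "t = - A / (C + 1)"
  have C: "0 \<le> C" unfolding C_def using nonneg[OF g] .
  have tg: "fscale t g \<in> S" using fun_space.subspace_scale[OF subspace g] .
  have ftg: "f + fscale t g \<in> S" using fun_space.subspace_add[OF subspace f tg] .
  have "ip (f + fscale t g) (f + fscale t g) = 2 * t * A + t * t * C"
    using add_left[OF f tg ftg] add_right[OF f tg f] add_right[OF f tg g]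
      scale_right[OF g f] scale_right[OF g g] scale_left[OF g ftg] sym[OF f g] ff
    unfolding A_def C_def by (simp add: algebra_simps)
  then have "0 \<le> (C + 1) * (C + 1) * (2 * t * A + t * t * C)"
    using nonneg[OF ftg] C by simp
  also have "(C + 1) * (C + 1) * (2 * t * A + t * t * C) = - A * A * (C + 2)"
  proof -
    have "t * (C + 1) = - A" using C unfolding t_def by simp
    then show ?thesis by algebra
  qed
  finally have "A * A * (C + 2) \<le> 0" by simp
  then have "A * A \<le> 0" using C by (simp add: mult_le_0_iff)
  then show ?thesis unfolding A_def by (auto simp: mult_le_0_iff)
qed

lemma orthogonal_span:
  assumes f: "f \<in> S" and B: "B \<subseteq> S" and orth: "\<forall>w\<in>B. ip f w = 0"
    and w: "w \<in> fun_space.span B"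
  shows "ip f w = 0"
proof -
  have "fun_space.subspace {w \<in> S. ip f w = 0}"
    unfolding fun_space.subspace_def
    using fun_space.subspace_0[OF subspace] fun_space.subspace_add[OF subspace]
      fun_space.subspace_scale[OF subspace] zero_right[OF f] add_right[OF _ _ f]
      scale_right[OF _ f]
    by auto
  then show ?thesis
    using fun_space.span_subspace_induct[OF w] B orth by blast
qed

text \<open>The Gram--Schmidt step: \<open>s - q\<close> is the part of \<open>s\<close> orthogonal to \<open>span B\<close>, and
  correcting \<open>p\<close> along it handles the new direction. If that part is null, then \<open>k = 0\<close>
  (division by zero) and no correction is needed, by \<open>orthogonal_if_self_zero\<close>.\<close>

lemma projection_insert:
  assumes s: "s \<in> S" and B: "B \<subseteq> S" and f: "f \<in> S"
    and p: "p \<in> fun_space.span B" "\<forall>w\<in>fun_space.span B. ip (f - p) w = 0"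
    and q: "q \<in> fun_space.span B" "\<forall>w\<in>fun_space.span B. ip (s - q) w = 0"
  shows "\<exists>p'\<in>fun_space.span (insert s B). \<forall>w\<in>fun_space.span (insert s B). ip (f - p') w = 0"
proof -
  define s' where "s' = s - q"
  define k where "k = ip (f - p) s' / ip s' s'"
  define p' where "p' = p + fscale k s'"
  have span_B: "fun_space.span B \<subseteq> S"
    using fun_space.span_minimal[OF B subspace] .
  have span_sB: "fun_space.span (insert s B) \<subseteq> S"
    using s B by (intro fun_space.span_minimal[OF _ subspace]) simp
  have qS: "q \<in> S" and pS: "p \<in> S" using p(1) q(1) span_B by auto
  have s'S: "s' \<in> S" and fpS: "f - p \<in> S"
    unfolding s'_def using fun_space.subspace_diff[OF subspace] s qS f pS by auto
  have p'_span: "p' \<in> fun_space.span (insert s B)"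
    unfolding p'_def s'_def using p(1) q(1) fun_space.span_mono[of B "insert s B"]
    by (auto intro!: fun_space.span_add fun_space.span_scale fun_space.span_diff
        intro: fun_space.span_base)
  have fp': "ip (f - p') w = ip (f - p) w - k * ip s' w" if "w \<in> S" for w
  proof -
    have "f - p' = (f - p) - fscale k s'" unfolding p'_def by (simp add: algebra_simps)
    then show ?thesis
      using diff_left[OF fpS fun_space.subspace_scale[OF subspace s'S] that] scale_left[OF s'S that]
      by (simp only:)
  qed
  have "ip (f - p') w = 0" if w: "w \<in> insert s B" for w
  proof (cases "w = s")
    case True
    have "s = s' + q" unfolding s'_def by simp
    then have "ip (f - p) s = ip (f - p) s'" and "ip s' s = ip s' s'"
      using add_right[OF s'S qS fpS] add_right[OF s'S qS s'S] p(2) q unfolding s'_def by simp_all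
    moreover have "ip s' s' = 0 \<Longrightarrow> ip (f - p) s' = 0"
      using orthogonal_if_self_zero[OF s'S fpS] sym[OF s'S fpS] by simp
    ultimately show ?thesis
      using fp'[OF s] True unfolding k_def by auto
  next
    case False
    then have "w \<in> fun_space.span B" using w fun_space.span_base by auto
    then show ?thesis
      using fp' p(2) q(2) span_B unfolding s'_def by auto
  qed
  moreover have "f - p' \<in> S"
    using fun_space.subspace_diff[OF subspace f] p'_span span_sB by auto
  ultimately show ?thesis
    using orthogonal_span[of "f - p'" "insert s B"] s B p'_span by blast
qed

lemma projection_onto_span_exists:
  assumes "finite B" "B \<subseteq> S" "f \<in> S"
  shows "\<exists>p\<in>fun_space.span B. \<forall>w\<in>fun_space.span B. ip (f - p) w = 0"
  using assms
proof (induction B arbitrary: f rule: finite_induct)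
  case empty
  then show ?case using zero_right[of f] by (simp add: zero_fun_def)
next
  case (insert s B)
  then have s: "s \<in> S" and B: "B \<subseteq> S" by auto
  obtain p where "p \<in> fun_space.span B" "\<forall>w\<in>fun_space.span B. ip (f - p) w = 0"
    using insert.IH[OF B insert.prems(2)] by blast
  moreover obtain q where "q \<in> fun_space.span B" "\<forall>w\<in>fun_space.span B. ip (s - q) w = 0"
    using insert.IH[OF B s] by blast
  ultimately show ?case
    by (rule projection_insert[OF s B insert.prems(2)])
qed

lemma ex1_projection:
  assumes U: "fun_space.subspace U" "U \<subseteq> S"
    and finite_dim: "finite G" "U \<subseteq> fun_space.span G"
    and definite: "\<And>d. d \<in> U \<Longrightarrow> ip d d = 0 \<Longrightarrow> d = 0"
    and f: "f \<in> S"
  shows "\<exists>!p. p \<in> U \<and> (\<forall>w\<in>U. ip (f - p) w = 0)"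
proof (rule ex_ex1I)
  obtain B where B: "B \<subseteq> U" "fun_space.independent B" "U \<subseteq> fun_space.span B"
    by (rule fun_space.basis_exists)
  have "finite B"
    using fun_space.independent_span_bound[OF finite_dim(1) B(2)] B(1) finite_dim(2) by blast
  moreover have "fun_space.span B = U"
    using fun_space.span_subspace[OF B(1,3) U(1)] .
  ultimately show "\<exists>p. p \<in> U \<and> (\<forall>w\<in>U. ip (f - p) w = 0)"
    using projection_onto_span_exists[of B f] B(1) U(2) f by auto
next
  fix p1 p2
  assume p1: "p1 \<in> U \<and> (\<forall>w\<in>U. ip (f - p1) w = 0)"
    and p2: "p2 \<in> U \<and> (\<forall>w\<in>U. ip (f - p2) w = 0)"
  have d: "p1 - p2 \<in> U" using fun_space.subspace_diff[OF U(1)] p1 p2 by blast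
  have "ip (p1 - p2) (p1 - p2) = ip (f - p2) (p1 - p2) - ip (f - p1) (p1 - p2)"
    using diff_left[of "f - p2" "f - p1" "p1 - p2"] fun_space.subspace_diff[OF subspace] f p1 p2 d U(2)
    by (auto simp: subset_iff)
  then have "ip (p1 - p2) (p1 - p2) = 0" using p1 p2 d by simp
  then show "p1 = p2" using definite[OF d] by simp
qed

end

section \<open>Piecewise functions on a grid\<close>

lemma pw_add: "pw ell gam (\<lambda>j x. c j x + d j x) x = pw ell gam c x + pw ell gam d x"
  unfolding pw_def by (simp add: sum.distrib distrib_right)

lemma pw_scale: "pw ell gam (\<lambda>j x. a * c j x) x = a * pw ell gam c x"
  unfolding pw_def by (simp only: sum_distrib_left mult.assoc)

lemma pw_zero: "pw ell gam (\<lambda>j x. 0) x = 0"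
  unfolding pw_def by simp

lemma pw_outside_cells: "(\<And>k. k < ell \<Longrightarrow> x \<notin> {gam k<..<gam (Suc k)}) \<Longrightarrow> pw ell gam c x = 0"
  unfolding pw_def by (intro sum.neutral) auto

lemma continuous_times_indicator_integrable:
  assumes "continuous_on UNIV (g :: real \<Rightarrow> real)"
  shows "(\<lambda>x. g x * indicator {a<..<c} x) integrable_on {s..t}"
proof -
  have "(\<lambda>x. if x \<in> {a..c} then g x else 0) integrable_on {s..t}"
    unfolding integrable_restrict_Int
    by (metis Int_atLeastAtMost assms continuous_on_subset integrable_continuous_interval subset_UNIV)
  then show ?thesis
    by (rule integrable_spike_finite[of "{a, c}", rotated 2]) (auto simp: indicator_def)
qed

lemma integral_restrict_subinterval:
  fixes g :: "real \<Rightarrow> 'b::banach"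
  assumes "{a..c} \<subseteq> {s..t}"
  shows "integral {s..t} (\<lambda>x. if x \<in> {a..c} then g x else 0) = integral {a..c} g"
proof -
  have "{a..c} \<inter> {s..t} = {a..c}" using assms by blast
  then show ?thesis by (metis Henstock_Kurzweil_Integration.integral_restrict_Int)
qed

lemma integral_times_indicator:
  assumes "{a..c} \<subseteq> {s..t}"
  shows "integral {s..t} (\<lambda>x. g x * indicator {a<..<c} x) = integral {a..c} (g :: real \<Rightarrow> real)"
proof -
  have "integral {s..t} (\<lambda>x. g x * indicator {a<..<c} x)
      = integral {s..t} (\<lambda>x. if x \<in> {a..c} then g x else 0)"
    by (rule integral_spike[of "{a, c}"]) (auto simp: indicator_def)
  also have "\<dots> = integral {a..c} g"
    using assms by (rule integral_restrict_subinterval)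
  finally show ?thesis .
qed

definition PCsp :: "nat \<Rightarrow> (nat \<Rightarrow> real) \<Rightarrow> (real \<Rightarrow> real) set" where
  "PCsp ell gam = {pw ell gam c | c. \<forall>j<ell. continuous_on UNIV (c j)}"

lemma pw_integrable:
  fixes c :: "nat \<Rightarrow> real \<Rightarrow> real"
  assumes "\<forall>j<ell. continuous_on UNIV (c j)"
  shows "pw ell gam c integrable_on {s..t}"
  using assms unfolding pw_def[abs_def]
  by (intro integrable_sum continuous_times_indicator_integrable) auto

lemma pw_space_subspace:
  assumes "fun_space.subspace V"
  shows "fun_space.subspace {pw ell gam c | c. \<forall>j<ell. c j \<in> V}"
  unfolding fun_space.subspace_def
proof (safe)
  show "\<exists>c. 0 = pw ell gam c \<and> (\<forall>j<ell. c j \<in> V)"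
    using fun_space.subspace_0[OF assms] by (intro exI[of _ "\<lambda>j. 0"]) (simp add: fun_eq_iff pw_zero zero_fun_def)
next
  fix c d :: "nat \<Rightarrow> real \<Rightarrow> real"
  assume "\<forall>j<ell. c j \<in> V" "\<forall>j<ell. d j \<in> V"
  then show "\<exists>e. pw ell gam c + pw ell gam d = pw ell gam e \<and> (\<forall>j<ell. e j \<in> V)"
    using fun_space.subspace_add[OF assms]
    by (intro exI[of _ "\<lambda>j. c j + d j"]) (auto simp: pw_add plus_fun_def)
next
  fix a and c :: "nat \<Rightarrow> real \<Rightarrow> real"
  assume "\<forall>j<ell. c j \<in> V"
  then show "\<exists>e. fscale a (pw ell gam c) = pw ell gam e \<and> (\<forall>j<ell. e j \<in> V)"
    using fun_space.subspace_scale[OF assms]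
    by (intro exI[of _ "\<lambda>j. fscale a (c j)"]) (auto simp: pw_scale fscale_def)
qed

lemma PCsp_subspace: "fun_space.subspace (PCsp ell gam)"
proof -
  have "fun_space.subspace {f. continuous_on UNIV f}"
    unfolding fun_space.subspace_def
    by (auto simp: fscale_def plus_fun_def zero_fun_def
        intro: continuous_on_add continuous_on_mult_left)
  from pw_space_subspace[OF this] show ?thesis
    unfolding PCsp_def by simp
qed

definition l2_inner :: "real \<Rightarrow> (real \<Rightarrow> real) \<Rightarrow> (real \<Rightarrow> real) \<Rightarrow> real" where
  "l2_inner b g h = integral {-b..b} (\<lambda>x. g x * h x)"

locale grid =
  fixes ell :: nat and gam :: "nat \<Rightarrow> real"
  assumes step_less: "j < ell \<Longrightarrow> gam j < gam (Suc j)"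
begin

abbreviation cell :: "nat \<Rightarrow> real set" where
  "cell k \<equiv> {gam k<..<gam (Suc k)}"

lemma gam_less: "i < j \<Longrightarrow> j \<le> ell \<Longrightarrow> gam i < gam j"
  by (rule lift_Suc_mono_less_ivl[of "{..<ell}"]) (auto intro: step_less)

lemma gam_le: "i \<le> j \<Longrightarrow> j \<le> ell \<Longrightarrow> gam i \<le> gam j"
  using gam_less by (metis le_less)

lemma cell_not_node: "k < ell \<Longrightarrow> x \<in> cell k \<Longrightarrow> j \<le> ell \<Longrightarrow> x \<noteq> gam j"
  using gam_le[of j k] gam_le[of "Suc k" j] by (cases "j \<le> k") auto

lemma cells_disjoint: "j < ell \<Longrightarrow> k < ell \<Longrightarrow> x \<in> cell j \<Longrightarrow> x \<in> cell k \<Longrightarrow> j = k"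
  using gam_le[of "Suc j" k] gam_le[of "Suc k" j] by (cases j k rule: linorder_cases) auto

lemma cell_or_node:
  assumes "gam 0 \<le> x" "x \<le> gam ell" "\<forall>j\<le>ell. x \<noteq> gam j"
  shows "\<exists>k<ell. x \<in> cell k"
proof -
  define J where "J = {j. j \<le> ell \<and> gam j < x}"
  define k where "k = Max J"
  have J: "finite J" "0 \<in> J" using assms unfolding J_def by force+
  have "k \<in> J" unfolding k_def using J by (intro Max_in) auto
  then have k: "k \<le> ell" "gam k < x" unfolding J_def by auto
  have "k < ell" using k assms(2) by (cases "k = ell") auto
  moreover have "\<not> gam (Suc k) < x"
  proof
    assume "gam (Suc k) < x"
    then have "Suc k \<in> J" using \<open>k < ell\<close> unfolding J_def by simp
    then show False using Max_ge[OF J(1)] unfolding k_def by fastforce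
  qed
  ultimately show ?thesis using k assms(3) by (metis Suc_leI linorder_neqE_linordered_idom greaterThanLessThan_iff)
qed

lemma pw_on_cell: "k < ell \<Longrightarrow> x \<in> cell k \<Longrightarrow> pw ell gam c x = c k x"
  unfolding pw_def using cells_disjoint by (subst sum.remove[of _ k]) (auto intro!: sum.neutral)

lemma pw_mult: "pw ell gam c x * pw ell gam d x = pw ell gam (\<lambda>j x. c j x * d j x) x"
  by (cases "\<exists>k<ell. x \<in> cell k") (auto simp: pw_on_cell pw_outside_cells)

lemma PCsp_mult_integrable:
  "g \<in> PCsp ell gam \<Longrightarrow> h \<in> PCsp ell gam \<Longrightarrow> (\<lambda>x. g x * h x) integrable_on {s..t}"
  unfolding PCsp_def by (auto simp: pw_mult intro!: pw_integrable continuous_on_mult)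

lemma l2_semi_inner_product: "semi_inner_product (PCsp ell gam) (l2_inner b)"
proof (unfold_locales)
  fix f g h assume "f \<in> PCsp ell gam" "g \<in> PCsp ell gam" "h \<in> PCsp ell gam"
  then show "l2_inner b (f + g) h = l2_inner b f h + l2_inner b g h"
    unfolding l2_inner_def plus_fun_def distrib_right
    by (intro integral_add PCsp_mult_integrable)
qed (auto simp: PCsp_subspace l2_inner_def fscale_def mult.assoc mult.left_commute mult.commute
  intro: integral_nonneg PCsp_mult_integrable)

end

section \<open>The space U(\<real>)\<close>

lemma C1_continuous: "C1fun f \<Longrightarrow> continuous_on UNIV f"
  unfolding C1fun_def by (intro differentiable_imp_continuous_on) (simp add: differentiable_on_def)

lemma C1_has_real_derivative: "C1fun f \<Longrightarrow> (f has_real_derivative deriv f x) (at x)"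
  unfolding C1fun_def using DERIV_deriv_iff_real_differentiable by blast

lemma subspace_C1: "fun_space.subspace (Collect C1fun)"
  unfolding fun_space.subspace_def
proof (safe)
  have "deriv (\<lambda>x::real. 0::real) = (\<lambda>x. 0)"
    by (intro ext DERIV_imp_deriv) (rule derivative_intros)
  then show "C1fun 0" unfolding C1fun_def zero_fun_def by simp
next
  fix f g assume f: "C1fun f" and g: "C1fun g"
  have "deriv (f + g) = (\<lambda>x. deriv f x + deriv g x)"
    unfolding plus_fun_def by (intro ext DERIV_imp_deriv derivative_intros C1_has_real_derivative f g)
  moreover have "(f + g) differentiable (at x)" for x
    using f g unfolding C1fun_def plus_fun_def by simp
  ultimately show "C1fun (f + g)"
    using f g unfolding C1fun_def by (auto intro: continuous_on_add)
next
  fix a f assume f: "C1fun f"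
  have "deriv (fscale a f) = (\<lambda>x. a * deriv f x)"
    unfolding fscale_def by (intro ext DERIV_imp_deriv DERIV_cmult C1_has_real_derivative f)
  moreover have "fscale a f differentiable (at x)" for x
    using f unfolding C1fun_def fscale_def by simp
  ultimately show "C1fun (fscale a f)"
    using f unfolding C1fun_def by (auto intro: continuous_on_mult_left)
qed

lemma subspace_Vspan: "fun_space.subspace (Vspan l)"
  unfolding fun_space.subspace_def Vspan_def
proof (safe)
  show "\<exists>c. 0 = (\<lambda>x. \<Sum>h\<in>l. c h * h x)"
    by (intro exI[of _ "\<lambda>h. 0"]) (simp add: zero_fun_def)
next
  fix c d :: "(real \<Rightarrow> real) \<Rightarrow> real"
  show "\<exists>e. (\<lambda>x. \<Sum>h\<in>l. c h * h x) + (\<lambda>x. \<Sum>h\<in>l. d h * h x) = (\<lambda>x. \<Sum>h\<in>l. e h * h x)"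
    by (intro exI[of _ "\<lambda>h. c h + d h"]) (simp add: plus_fun_def sum.distrib distrib_right)
next
  fix a and c :: "(real \<Rightarrow> real) \<Rightarrow> real"
  show "\<exists>e. fscale a (\<lambda>x. \<Sum>h\<in>l. c h * h x) = (\<lambda>x. \<Sum>h\<in>l. e h * h x)"
    by (intro exI[of _ "\<lambda>h. a * c h"]) (simp add: fscale_def sum_distrib_left mult.assoc)
qed

lemma pw_single:
  "k < ell \<Longrightarrow> pw ell gam (\<lambda>j. if j = k then h else 0) x = h x * indicator {gam k<..<gam (Suc k)} x"
  unfolding pw_def by (simp add: if_distrib[of "\<lambda>g. g x * _"] cong: if_cong)

lemma Usp_eq: "Usp l ell gam = {pw ell gam c | c. \<forall>j<ell. c j \<in> Vspan l \<inter> Collect C1fun}"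
  unfolding Usp_def by simp

lemma Usp_subspace: "fun_space.subspace (Usp l ell gam)"
  unfolding Usp_eq
  by (rule pw_space_subspace) (intro fun_space.subspace_inter subspace_Vspan subspace_C1)

lemma Usp_subset_PCsp: "Usp l ell gam \<subseteq> PCsp ell gam"
  unfolding Usp_def PCsp_def using C1_continuous by blast

lemma sum_fun_apply: "(\<Sum>i\<in>A. f i) x = (\<Sum>i\<in>A. f i x :: 'b :: comm_monoid_add)"
  by (induction A rule: infinite_finite_induct) (auto simp: plus_fun_def zero_fun_def)

text \<open>The generators need not lie in \<open>Usp\<close> (the elements of \<open>l\<close> need not be \<open>C\<^sup>1\<close>);
  containment in their span is all that finite dimensionality requires.\<close>

lemma Usp_subset_span:
  assumes "finite l"
  shows "Usp l ell gam \<subseteq> fun_space.span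
           ((\<lambda>(k, h). pw ell gam (\<lambda>j. if j = k then h else 0)) ` ({..<ell} \<times> l))"
    (is "_ \<subseteq> fun_space.span ?G")
proof
  fix f assume "f \<in> Usp l ell gam"
  then obtain c where f: "f = pw ell gam c" and c: "\<forall>j<ell. c j \<in> Vspan l"
    unfolding Usp_def by blast
  have "\<forall>j. \<exists>a. j < ell \<longrightarrow> c j = (\<lambda>x. \<Sum>h\<in>l. a h * h x)"
    using c unfolding Vspan_def by blast
  then obtain a where a: "\<And>j. j < ell \<Longrightarrow> c j = (\<lambda>x. \<Sum>h\<in>l. a j h * h x)"
    by metis
  have "f = (\<Sum>k<ell. \<Sum>h\<in>l. fscale (a k h) (pw ell gam (\<lambda>j. if j = k then h else 0)))"
  proof
    fix x
    have "f x = (\<Sum>k<ell. \<Sum>h\<in>l. a k h * (h x * indicator {gam k<..<gam (Suc k)} x))"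
      unfolding f pw_def using a by (simp add: sum_distrib_right mult.assoc)
    then show "f x = (\<Sum>k<ell. \<Sum>h\<in>l. fscale (a k h) (pw ell gam (\<lambda>j. if j = k then h else 0))) x"
      by (simp add: sum_fun_apply fscale_def pw_single)
  qed
  then show "f \<in> fun_space.span ?G"
    by (simp only:) (intro fun_space.span_sum fun_space.span_scale fun_space.span_base; auto)
qed

locale grid_interval = grid +
  fixes b :: real
  assumes gam_first: "gam 0 = - b" and gam_last: "gam ell = b"
begin

sublocale L2: semi_inner_product "PCsp ell gam" "l2_inner b"
  by (rule l2_semi_inner_product)

lemma nodes_interval_subset: "i \<le> j \<Longrightarrow> j \<le> ell \<Longrightarrow> {gam i..gam j} \<subseteq> {-b..b}"
  using gam_le[of 0 i] gam_le[of j ell] gam_first gam_last by auto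

text \<open>Testing \<open>d\<close> against its own piece on one cell reduces definiteness to the vanishing
  of \<open>\<integral> c\<^sub>k\<^sup>2\<close> over that cell.\<close>

lemma l2_definite_on_Usp:
  assumes d: "d \<in> Usp l ell gam" and dd: "l2_inner b d d = 0"
  shows "d = 0"
proof
  fix x
  obtain c where d_eq: "d = pw ell gam c" and c: "\<forall>j<ell. c j \<in> Vspan l \<and> C1fun (c j)"
    using d unfolding Usp_def by blast
  show "d x = 0 x"
  proof (cases "\<exists>k<ell. x \<in> cell k")
    case False
    then show ?thesis using pw_outside_cells d_eq by simp
  next
    case True
    then obtain k where k: "k < ell" "x \<in> cell k" by blast
    define w where "w = pw ell gam (\<lambda>j. if j = k then c k else 0)"
    have "\<forall>j<ell. (if j = k then c k else 0) \<in> Vspan l \<inter> Collect C1fun"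
      using c fun_space.subspace_0[OF subspace_Vspan] fun_space.subspace_0[OF subspace_C1] by simp
    then have "w \<in> Usp l ell gam" unfolding w_def Usp_eq by blast
    then have "l2_inner b d w = 0"
      using L2.orthogonal_if_self_zero d dd Usp_subset_PCsp by blast
    moreover have "d y * w y = (c k y * c k y) * indicator (cell k) y" for y
      unfolding w_def pw_single[OF k(1)] d_eq by (cases "y \<in> cell k") (auto simp: pw_on_cell k)
    moreover have cont: "continuous_on UNIV (\<lambda>y. c k y * c k y)"
      using C1_continuous c k(1) by (auto intro: continuous_on_mult)
    ultimately have "integral {gam k..gam (Suc k)} (\<lambda>y. c k y * c k y) = 0"
      using integral_times_indicator[OF nodes_interval_subset[of k "Suc k"]] k(1)
      unfolding l2_inner_def by simp
    then have "\<forall>y\<in>{gam k..gam (Suc k)}. c k y * c k y = 0"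
      using integral_cbox_eq_0_iff[of "gam k" "gam (Suc k)" "\<lambda>y. c k y * c k y"]
        continuous_on_subset[OF cont] step_less[OF k(1)] by simp
    then show ?thesis using k pw_on_cell d_eq by auto
  qed
qed

lemma Pproj_in_Usp_orthogonal:
  assumes "finite l" and f: "f \<in> PCsp ell gam"
  shows "Pproj l b ell gam f \<in> Usp l ell gam \<and>
    (\<forall>w\<in>Usp l ell gam. integral {-b..b} (\<lambda>x. (f x - Pproj l b ell gam f x) * w x) = 0)"
proof -
  have "\<exists>!p. p \<in> Usp l ell gam \<and> (\<forall>w\<in>Usp l ell gam. l2_inner b (f - p) w = 0)"
    by (rule L2.ex1_projection[OF Usp_subspace Usp_subset_PCsp _ Usp_subset_span[OF assms(1)]
        l2_definite_on_Usp f]) (simp add: assms(1))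
  then show ?thesis
    unfolding Pproj_def l2_inner_def fun_diff_def by (rule theI')
qed

end

section \<open>Restrictions of \<open>C\<^sup>1\<close> functions and integration by parts\<close>

lemma rlim_eqI:
  assumes "a < c" and "\<forall>x\<in>{a<..<c}. w x = F x" and "isCont F a"
  shows "rlim w a = F a"
proof -
  have "(F \<longlongrightarrow> F a) (at_right a)" using assms(3) by (simp add: isCont_def filterlim_at_split)
  moreover have "eventually (\<lambda>x. F x = w x) (at_right a)"
    unfolding eventually_at_right_field using assms(1,2) by (intro exI[of _ c]) auto
  ultimately have "(w \<longlongrightarrow> F a) (at_right a)" by (rule Lim_transform_eventually)
  then show ?thesis unfolding rlim_def by (intro tendsto_Lim) auto
qed

lemma llim_eqI:
  assumes "a < c" and "\<forall>x\<in>{a<..<c}. w x = F x" and "isCont F c"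
  shows "llim w c = F c"
proof -
  have "(F \<longlongrightarrow> F c) (at_left c)" using assms(3) by (simp add: isCont_def filterlim_at_split)
  moreover have "eventually (\<lambda>x. F x = w x) (at_left c)"
    unfolding eventually_at_left_field using assms(1,2) by (intro exI[of _ a]) auto
  ultimately have "(w \<longlongrightarrow> F c) (at_left c)" by (rule Lim_transform_eventually)
  then show ?thesis unfolding llim_def by (intro tendsto_Lim) auto
qed

context grid_interval
begin

lemma gval_on_cell:
  assumes "k < ell" "x \<in> cell k"
  shows "gval ell gam w x = w x"
proof -
  have "\<forall>j\<le>ell. x \<noteq> gam j" using cell_not_node[OF assms] by blast
  then show ?thesis unfolding gval_def by auto
qed

context
  fixes c :: "nat \<Rightarrow> real \<Rightarrow> real" and F :: "real \<Rightarrow> real"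
  assumes restricts: "\<forall>x\<in>{-b..b}. gval ell gam (pw ell gam c) x = F x"
begin

lemma coeff_eq_on_cell:
  assumes "k < ell" "x \<in> cell k"
  shows "c k x = F x"
proof -
  have "x \<in> {-b..b}" using nodes_interval_subset[of k "Suc k"] assms by auto
  then have "F x = gval ell gam (pw ell gam c) x" using restricts by simp
  also have "\<dots> = c k x" using gval_on_cell[OF assms] pw_on_cell[OF assms] by simp
  finally show ?thesis by simp
qed

lemma deriv_coeff_eq_on_cell:
  assumes k: "k < ell" and x: "x \<in> cell k"
  shows "deriv (c k) x = deriv F x"
proof -
  have "eventually (\<lambda>y. y \<in> cell k) (nhds x)"
    using x by (intro eventually_nhds_in_open) auto
  then have "eventually (\<lambda>y. c k y = F y) (nhds x)"
    by eventually_elim (rule coeff_eq_on_cell[OF k])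
  then show ?thesis by (rule deriv_cong_ev) simp
qed

context
  assumes F: "C1fun F"
begin

lemma rlim_pw_at_node: "k < ell \<Longrightarrow> rlim (pw ell gam c) (gam k) = F (gam k)"
  using step_less C1_continuous[OF F]
  by (intro rlim_eqI[where c = "gam (Suc k)"]) (auto simp: pw_on_cell coeff_eq_on_cell continuous_on_eq_continuous_at)

lemma llim_pw_at_node: "k < ell \<Longrightarrow> llim (pw ell gam c) (gam (Suc k)) = F (gam (Suc k))"
  using step_less C1_continuous[OF F]
  by (intro llim_eqI[where a = "gam k"]) (auto simp: pw_on_cell coeff_eq_on_cell continuous_on_eq_continuous_at)

lemma Dop_eq_Pproj: "Dop l b ell gam c = Pproj l b ell gam (pw ell gam (\<lambda>j. deriv (c j)))"
proof -
  have "rlim (pw ell gam c) (gam j) = llim (pw ell gam c) (gam j)" if "j \<in> {1..<ell}" for j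
    using that rlim_pw_at_node[of j] llim_pw_at_node[of "j - 1"] by (cases j) auto
  then show ?thesis unfolding Dop_def[abs_def] by simp
qed

end

end

lemma pw_truncate:
  assumes "n \<le> m" "m \<le> ell"
  shows "pw ell gam (\<lambda>j. if n \<le> j \<and> j < m then c j else 0) x
       = (if x \<in> {gam n..gam m} then pw ell gam c x else 0)"
proof (cases "\<exists>k<ell. x \<in> cell k")
  case False
  then show ?thesis using pw_outside_cells by simp
next
  case True
  then obtain k where k: "k < ell" "x \<in> cell k" by blast
  have "x \<in> {gam n..gam m} \<longleftrightarrow> n \<le> k \<and> k < m"
  proof
    assume "x \<in> {gam n..gam m}"
    then show "n \<le> k \<and> k < m"
      using k gam_le[of "Suc k" n] gam_le[of m k] assms by force
  next
    assume "n \<le> k \<and> k < m"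
    then show "x \<in> {gam n..gam m}"
      using k gam_le[of n k] gam_le[of "Suc k" m] assms by auto
  qed
  then show ?thesis using pw_on_cell[OF k] by simp
qed

lemma integral_Pproj_times_Usp:
  assumes "finite l" and f: "f \<in> PCsp ell gam" and cv: "\<forall>j<ell. cv j \<in> Vspan l \<and> C1fun (cv j)"
    and nm: "n \<le> m" "m \<le> ell"
  shows "integral {gam n..gam m} (\<lambda>x. Pproj l b ell gam f x * pw ell gam cv x)
       = integral {gam n..gam m} (\<lambda>x. f x * pw ell gam cv x)"
proof -
  let ?P = "Pproj l b ell gam f" and ?v = "pw ell gam cv"
  have P: "?P \<in> Usp l ell gam"
    and orth: "\<forall>w\<in>Usp l ell gam. integral {-b..b} (\<lambda>x. (f x - ?P x) * w x) = 0"
    using Pproj_in_Usp_orthogonal[OF assms(1) f] by auto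
  have v: "?v \<in> Usp l ell gam" using cv unfolding Usp_def by blast
  have "\<forall>j<ell. (if n \<le> j \<and> j < m then cv j else 0) \<in> Vspan l \<inter> Collect C1fun"
    using cv fun_space.subspace_0[OF subspace_Vspan] fun_space.subspace_0[OF subspace_C1] by simp
  then have "pw ell gam (\<lambda>j. if n \<le> j \<and> j < m then cv j else 0) \<in> Usp l ell gam"
    unfolding Usp_eq by blast
  then have "0 = integral {-b..b} (\<lambda>x. (f x - ?P x) * pw ell gam (\<lambda>j. if n \<le> j \<and> j < m then cv j else 0) x)"
    using orth by simp
  also have "\<dots> = integral {-b..b} (\<lambda>x. if x \<in> {gam n..gam m} then (f x - ?P x) * ?v x else 0)"
    unfolding pw_truncate[OF nm] by (simp add: if_distrib[of "\<lambda>y. _ * y"] cong: if_cong)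
  also have "\<dots> = integral {gam n..gam m} (\<lambda>x. (f x - ?P x) * ?v x)"
    using nodes_interval_subset[OF nm] by (rule integral_restrict_subinterval)
  also have "\<dots> = integral {gam n..gam m} (\<lambda>x. f x * ?v x) - integral {gam n..gam m} (\<lambda>x. ?P x * ?v x)"
    unfolding left_diff_distrib using f P v Usp_subset_PCsp
    by (intro integral_diff PCsp_mult_integrable) auto
  finally show ?thesis by simp
qed

lemma pw_deriv_product_has_integral:
  assumes u: "\<forall>x\<in>{-b..b}. gval ell gam (pw ell gam cu) x = fu x" "C1fun fu"
    and v: "\<forall>x\<in>{-b..b}. gval ell gam (pw ell gam cv) x = fv x" "C1fun fv"
    and nm: "n \<le> m" "m \<le> ell"
  shows "((\<lambda>x. pw ell gam (\<lambda>j. deriv (cu j)) x * pw ell gam cv x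
             + pw ell gam (\<lambda>j. deriv (cv j)) x * pw ell gam cu x)
          has_integral fu (gam m) * fv (gam m) - fu (gam n) * fv (gam n)) {gam n..gam m}"
proof -
  have "((\<lambda>x. deriv fu x * fv x + deriv fv x * fu x)
          has_integral fu (gam m) * fv (gam m) - fu (gam n) * fv (gam n)) {gam n..gam m}"
  proof (rule fundamental_theorem_of_calculus)
    show "gam n \<le> gam m" using gam_le nm .
  next
    fix x
    have "((\<lambda>x. fu x * fv x) has_real_derivative deriv fu x * fv x + deriv fv x * fu x) (at x)"
      by (intro DERIV_mult C1_has_real_derivative u(2) v(2))
    then show "((\<lambda>x. fu x * fv x) has_vector_derivative deriv fu x * fv x + deriv fv x * fu x)
        (at x within {gam n..gam m})"
      unfolding has_real_derivative_iff_has_vector_derivative by (rule has_vector_derivative_at_within)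
  qed
  then show ?thesis
  proof (rule has_integral_spike_finite[rotated 2])
    fix x assume x: "x \<in> {gam n..gam m} - gam ` {..ell}"
    then obtain k where k: "k < ell" "x \<in> cell k"
      using cell_or_node[of x] gam_le[of 0 n] gam_le[of m ell] nm by auto
    show "pw ell gam (\<lambda>j. deriv (cu j)) x * pw ell gam cv x + pw ell gam (\<lambda>j. deriv (cv j)) x * pw ell gam cu x
        = deriv fu x * fv x + deriv fv x * fu x"
      using deriv_coeff_eq_on_cell[OF u(1) k] deriv_coeff_eq_on_cell[OF v(1) k]
        coeff_eq_on_cell[OF u(1) k] coeff_eq_on_cell[OF v(1) k]
      by (simp add: pw_on_cell[OF k])
  qed simp
qed

theorem Dop_integration_by_parts:
  assumes "finite l"
    and cu: "\<forall>j<ell. cu j \<in> Vspan l \<and> C1fun (cu j)"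
    and cv: "\<forall>j<ell. cv j \<in> Vspan l \<and> C1fun (cv j)"
    and u: "C1fun fu" "\<forall>x\<in>{-b..b}. gval ell gam (pw ell gam cu) x = fu x"
    and v: "C1fun fv" "\<forall>x\<in>{-b..b}. gval ell gam (pw ell gam cv) x = fv x"
    and nm: "n < m" "m \<le> ell"
  shows "integral {gam n..gam m} (\<lambda>x. Dop l b ell gam cu x * pw ell gam cv x)
       = - integral {gam n..gam m} (\<lambda>x. pw ell gam cu x * Dop l b ell gam cv x)
         + llim (pw ell gam cu) (gam m) * llim (pw ell gam cv) (gam m)
         - rlim (pw ell gam cu) (gam n) * rlim (pw ell gam cv) (gam n)"
proof -
  have in_PCsp: "pw ell gam c \<in> PCsp ell gam" "pw ell gam (\<lambda>j. deriv (c j)) \<in> PCsp ell gam"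
    if "\<forall>j<ell. c j \<in> Vspan l \<and> C1fun (c j)" for c
    using that C1_continuous unfolding PCsp_def C1fun_def by blast+
  have "integral {gam n..gam m} (\<lambda>x. Dop l b ell gam cu x * pw ell gam cv x)
      = integral {gam n..gam m} (\<lambda>x. pw ell gam (\<lambda>j. deriv (cu j)) x * pw ell gam cv x)"
    using Dop_eq_Pproj[OF u(2,1)] integral_Pproj_times_Usp[OF assms(1) in_PCsp(2)[OF cu] cv] nm by simp
  moreover have "integral {gam n..gam m} (\<lambda>x. pw ell gam cu x * Dop l b ell gam cv x)
      = integral {gam n..gam m} (\<lambda>x. pw ell gam (\<lambda>j. deriv (cv j)) x * pw ell gam cu x)"
    using Dop_eq_Pproj[OF v(2,1)] integral_Pproj_times_Usp[OF assms(1) in_PCsp(2)[OF cv] cu] nm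
    by (simp add: mult.commute)
  moreover have "integral {gam n..gam m} (\<lambda>x. pw ell gam (\<lambda>j. deriv (cu j)) x * pw ell gam cv x)
      + integral {gam n..gam m} (\<lambda>x. pw ell gam (\<lambda>j. deriv (cv j)) x * pw ell gam cu x)
      = fu (gam m) * fv (gam m) - fu (gam n) * fv (gam n)"
    using integral_unique[OF pw_deriv_product_has_integral[OF u(2,1) v(2,1) less_imp_le[OF nm(1)] nm(2)]]
      integral_add[OF PCsp_mult_integrable[OF in_PCsp(2)[OF cu] in_PCsp(1)[OF cv]]
                      PCsp_mult_integrable[OF in_PCsp(2)[OF cv] in_PCsp(1)[OF cu]]]
    by simp
  moreover have "llim (pw ell gam cu) (gam m) = fu (gam m)" "llim (pw ell gam cv) (gam m) = fv (gam m)"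
    using llim_pw_at_node[OF u(2,1), of "m - 1"] llim_pw_at_node[OF v(2,1), of "m - 1"] nm by auto
  moreover have "rlim (pw ell gam cu) (gam n) = fu (gam n)" "rlim (pw ell gam cv) (gam n) = fv (gam n)"
    using rlim_pw_at_node[OF u(2,1), of n] rlim_pw_at_node[OF v(2,1), of n] nm by auto
  ultimately show ?thesis by (simp add: algebra_simps)
qed

end

theorem mainTheorem12:
  fixes F :: "idx filter"
    and beta eta :: "idx \<Rightarrow> real"
    and ell n m :: "idx \<Rightarrow> nat"
    and gam :: "idx \<Rightarrow> nat \<Rightarrow> real"
    and cu cv :: "idx \<Rightarrow> nat \<Rightarrow> real \<Rightarrow> real"
    and fu fv :: "idx \<Rightarrow> real \<Rightarrow> real"
  assumes LF: "Lambda_filter F"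
    and beta_inf: "\<forall>r::real. eventually (\<lambda>l. beta l > r) F"
    and eta_infinitesimal: "\<forall>r::real. r > 0 \<longrightarrow> eventually (\<lambda>l. 0 < eta l \<and> eta l < r) F"
    and grid: "eventually (\<lambda>l. gam l 0 = - beta l \<and> gam l (ell l) = beta l \<and>
                 (\<forall>j<ell l. 0 < gam l (Suc j) - gam l j \<and> gam l (Suc j) - gam l j < eta l)) F"
    and reals_in_grid: "\<forall>r::real. eventually (\<lambda>l. \<exists>j\<le>ell l. gam l j = r) F"
    and u_in_U: "eventually (\<lambda>l. \<forall>j<ell l. cu l j \<in> Vspan l \<and> C1fun (cu l j)) F"
    and v_in_U: "eventually (\<lambda>l. \<forall>j<ell l. cv l j \<in> Vspan l \<and> C1fun (cv l j)) F"
    and u_restr: "eventually (\<lambda>l. C1fun (fu l) \<and>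
                 (\<forall>x\<in>{- beta l..beta l}. gval (ell l) (gam l) (pw (ell l) (gam l) (cu l)) x = fu l x)) F"
    and v_restr: "eventually (\<lambda>l. C1fun (fv l) \<and>
                 (\<forall>x\<in>{- beta l..beta l}. gval (ell l) (gam l) (pw (ell l) (gam l) (cv l)) x = fv l x)) F"
    and nm: "eventually (\<lambda>l. n l < m l \<and> m l \<le> ell l) F"
  shows "eventually (\<lambda>l.
     integral {gam l (n l)..gam l (m l)}
        (\<lambda>x. Dop l (beta l) (ell l) (gam l) (cu l) x * pw (ell l) (gam l) (cv l) x)
   = - integral {gam l (n l)..gam l (m l)}
        (\<lambda>x. pw (ell l) (gam l) (cu l) x * Dop l (beta l) (ell l) (gam l) (cv l) x)
     + llim (pw (ell l) (gam l) (cu l)) (gam l (m l)) * llim (pw (ell l) (gam l) (cv l)) (gam l (m l))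
     - rlim (pw (ell l) (gam l) (cu l)) (gam l (n l)) * rlim (pw (ell l) (gam l) (cv l)) (gam l (n l))) F"
  \<comment> \<open>Only finiteness of the index and the pointwise hypotheses are used.\<close>
proof -
  have "eventually finite F"
    using LF unfolding Lambda_filter_def by (auto elim: eventually_mono)
  with grid u_in_U v_in_U u_restr v_restr nm show ?thesis
  proof eventually_elim
    case (elim l)
    then interpret grid_interval "ell l" "gam l" "beta l"
      by unfold_locales auto
    show ?case
      using elim by (intro Dop_integration_by_parts[where fu = "fu l" and fv = "fv l"]) auto
  qed
qed

end
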